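(* Let $n,m,\ell$ be integers with $n-1\ge m\ge \ell\ge 0$. Then $$\mathcal Y_n\big(2^{\{m-\ell\}},1^{\{\ell\}}\big)+n\sum_{j=0}^{n-m-2}\mathcal Y_n\big(3^{\{m-\ell+1+j\}},2^{\{\ell-1-j\}},1^{\{n-m-2-j\}}\big)=\frac{1}{n(m+1)}\left(\binom{n-1}{m}+(-1)^m\binom{n-1}{2m+1}\right)\binom{n}{\ell}.$$
   Context: Let $\zeta_n=e^{2\pi\sqrt{-1}/n}$. For positive integers $s_1,\dots,s_m$, define $\mathfrak Z_n(s_1,\dots,s_m):=\sum_{1\le i_1<\cdots<i_m\le n-1}\prod_{k=1}^{m}(1-\zeta_n^{i_k})^{-s_k}$ (equal to $1$ if $m=0$ and to $0$ if $m>n-1$). Define $\mathcal Y_n(s_1,\dots,s_m):=\sum_{\sigma}\mathfrak Z_n(\sigma)$, where $\sigma$ runs over all distinct rearrangements of $(s_1,\dots,s_m)$; $\mathcal Y_n$ of the empty sequence is $1$. Notation: $a^{\{k\}}$ denotes the block $a,\dots,a$ of length $k$; any $\mathcal Y_n$ term in which some block has negative length is interpreted as $0$. Binomial coefficients $\binom{a}{b}$ are $0$ when $b<0$ or $b>a\ge0$. *)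

theory Defs
  imports Complex_Main "HOL-Combinatorics.Multiset_Permutations"
begin

definition zeta :: "nat \<Rightarrow> complex" where
  "zeta n = cis (2 * pi / real n)"

text \<open>Increasing index tuples are the sorted lists of m-element subsets of {1..n-1}.\<close>
definition frakZ :: "nat \<Rightarrow> nat list \<Rightarrow> complex" where
  "frakZ n s = (\<Sum>I\<in>{I. I \<subseteq> {1..n-1} \<and> card I = length s}.
      (\<Prod>k<length s. inverse ((1 - zeta n ^ (sorted_list_of_set I ! k)) ^ (s ! k))))"

definition calY :: "nat \<Rightarrow> nat list \<Rightarrow> complex" where
  "calY n s = (\<Sum>\<sigma>\<in>permutations_of_multiset (mset s). frakZ n \<sigma>)"

text \<open>calY applied to a concatenation of blocks a^{k}, given as pairs (a,k);
  the term is 0 if some block has negative length.\<close>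
definition calY_blocks :: "nat \<Rightarrow> (nat \<times> int) list \<Rightarrow> complex" where
  "calY_blocks n bs = (if \<exists>(a,k)\<in>set bs. k < 0 then 0
     else calY n (concat (map (\<lambda>(a,k). replicate (nat k) a) bs)))"

end

theory Submission
  imports Defs "HOL-Computational_Algebra.Fundamental_Theorem_Algebra"
begin

(*
  Write t_i = 1 / (1 - zeta^i) for 1 <= i <= n - 1.  An exponent function on {1..n-1} is the same
  as its support together with the arrangement of its nonzero values along the support, so
  Y_n(s) is the monomial symmetric function of the t_i with exponent multiset s, padded by zeros.

  Since prod_i (x - zeta^i) = 1 + x + ... + x^(n-1), the generating polynomial prod_i (1 + t_i X)
  is ((1 + X)^n - 1) / (n X); hence e_k(t) = C(n, k+1) / n, and since prod_i (1 - t_i^2 X^2) is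
  that polynomial at X times its value at -X, e_m(t^2) = (C(n, m+1) + 2 (-1)^m C(n, 2m+2)) / n^2.

  Expanding e_(n-1-l)(t) e_m(t^2) over pairs of index sets (A, B), with exponent 1_A + 2 1_B, and
  grouping by a = |A Int B| gives the left-hand side divided by n: for a = m - l the support is
  everything and the term is (t_1 ... t_(n-1)) Y_n(2^(m-l), 1^l) = Y_n(2^(m-l), 1^l) / n, the
  other terms are the Y_n(3^a, 2^(m-a), 1^(n-1-l-a)), and the summands with a > m in the
  statement vanish because a block has negative length.
*)

section \<open>Roots of unity\<close>

lemma zeta_power: "zeta n ^ k = cis (2 * pi * real k / real n)"
  by (simp add: zeta_def DeMoivre mult_ac)

lemma bij_betw_zeta_powers: "n > 0 \<Longrightarrow> bij_betw (\<lambda>k. zeta n ^ k) {..<n} {z. z ^ n = 1}"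
  using bij_betw_roots_unity[of n] by (simp add: zeta_power)

lemma zeta_power_neq_1:
  assumes "0 < k" "k < n"
  shows "zeta n ^ k \<noteq> 1"
proof -
  have "inj_on (\<lambda>k. zeta n ^ k) {..<n}"
    using bij_betw_zeta_powers[of n] assms by (simp add: bij_betw_def)
  then show ?thesis
    using assms by (metis inj_onD lessThan_iff less_trans not_less0 power_0)
qed

lemma prod_pCons_zeta_powers:
  assumes "n > 0"
  shows "(\<Prod>k<n. [:- (zeta n ^ k), 1:]) = (monom 1 n - 1 :: complex poly)"
proof -
  let ?p = "monom 1 n - 1 :: complex poly"
  have roots: "poly ?p z = 0 \<longleftrightarrow> z ^ n = 1" for z
    by (simp add: poly_monom)
  have "rsquarefree ?p"
    unfolding rsquarefree_roots
  proof (intro allI notI)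
    fix z assume "poly ?p z = 0 \<and> poly (pderiv ?p) z = 0"
    then have "z ^ n = 1" "of_nat n * z ^ (n - 1) = 0"
      by (auto simp: poly_monom pderiv_diff pderiv_monom)
    then show False
      using assms by (cases "z = 0") (auto simp: power_0_left)
  qed
  moreover have "lead_coeff ?p = 1"
  proof -
    have "degree ?p = n"
      using assms degree_add_eq_left[of "-1" "monom (1::complex) n"] by (simp add: degree_monom_eq)
    then show ?thesis
      using assms by simp
  qed
  ultimately have "?p = (\<Prod>z | poly ?p z = 0. [:- z, 1:])"
    by (metis (no_types) complex_poly_decompose_rsquarefree smult_1_left)
  also have "\<dots> = (\<Prod>k<n. [:- (zeta n ^ k), 1:])"
    unfolding roots by (rule prod.reindex_bij_betw[OF bij_betw_zeta_powers[OF assms], symmetric])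
  finally show ?thesis ..
qed

lemma prod_diff_zeta_powers:
  assumes "n > 0"
  shows "(\<Prod>i\<in>{1..n-1}. x - zeta n ^ i) = (\<Sum>k<n. x ^ k)"
proof -
  have "[:-1, 1:] * (\<Prod>i\<in>{1..n-1}. [:- (zeta n ^ i), 1:]) = (monom 1 n - 1 :: complex poly)"
  proof -
    have "{..<n} = insert 0 {1..n-1}"
      using assms by auto
    then show ?thesis
      using prod_pCons_zeta_powers[OF assms] by simp
  qed
  also have "\<dots> = [:-1, 1:] * (\<Sum>k<n. monom 1 k)"
    by (simp add: poly_eq_poly_eq_iff[symmetric] fun_eq_iff poly_monom poly_sum power_diff_1_eq algebra_simps)
  finally have "(\<Prod>i\<in>{1..n-1}. [:- (zeta n ^ i), 1:]) = (\<Sum>k<n. monom 1 k :: complex poly)"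
    by (subst (asm) mult_left_cancel) auto
  then have "poly (\<Prod>i\<in>{1..n-1}. [:- (zeta n ^ i), 1:]) x = poly (\<Sum>k<n. monom 1 k) x"
    by simp
  then show ?thesis
    by (simp add: poly_prod poly_sum poly_monom)
qed

definition elem_sym :: "'a set \<Rightarrow> ('a \<Rightarrow> 'b::comm_semiring_1) \<Rightarrow> nat \<Rightarrow> 'b" where
  "elem_sym S c k = (\<Sum>A | A \<subseteq> S \<and> card A = k. \<Prod>i\<in>A. c i)"

lemma elem_sym_uminus:
  fixes c :: "'a \<Rightarrow> 'b::comm_ring_1"
  shows "elem_sym S (\<lambda>i. - c i) k = (-1) ^ k * elem_sym S c k"
  unfolding elem_sym_def sum_distrib_left by (intro sum.cong refl) (auto simp: prod_uminus)

lemma elem_sym_const: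
  assumes "finite S"
  shows "elem_sym S (\<lambda>i. a) k = of_nat (card S choose k) * a ^ k"
  unfolding elem_sym_def using n_subsets[OF assms, of k] by simp

lemma prod_monom:
  "finite A \<Longrightarrow> (\<Prod>i\<in>A. monom (c i) d) = monom (\<Prod>i\<in>A. c i) (d * card A)"
  by (induction A rule: finite_induct) (auto simp: mult_monom)

lemma coeff_prod_monom_plus_1:
  fixes c :: "'a \<Rightarrow> 'b::comm_semiring_1"
  assumes "finite S" "d > 0"
  shows "coeff (\<Prod>i\<in>S. monom (c i) d + 1) (d * k) = elem_sym S c k"
proof -
  have "(\<Prod>i\<in>S. monom (c i) d + 1) = (\<Sum>A\<in>Pow S. monom (\<Prod>i\<in>A. c i) (d * card A))"
    unfolding prod_add[OF assms(1)]
    using assms(1) by (intro sum.cong refl) (auto simp: prod_monom finite_subset)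
  then have "coeff (\<Prod>i\<in>S. monom (c i) d + 1) (d * k)
      = (\<Sum>A\<in>Pow S. if card A = k then \<Prod>i\<in>A. c i else 0)"
    using assms(2) by (simp add: coeff_sum coeff_monom)
  also have "\<dots> = elem_sym S c k"
    unfolding elem_sym_def using assms(1) by (simp add: sum.inter_filter[symmetric] Pow_def)
  finally show ?thesis .
qed

lemma coeff_linear_poly_power_1:
  fixes b :: "'a::comm_semiring_1"
  shows "coeff ([:1, b:] ^ n) i = of_nat (n choose i) * b ^ i"
proof (cases "i \<le> n")
  case True
  then show ?thesis
    using coeff_linear_poly_power[OF True, of 1 b] by simp
next
  case False
  have "degree ([:1, b:] ^ n) \<le> n"
    by (rule order.trans[OF degree_power_le]) (auto simp: degree_pCons_le)
  then show ?thesis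
    using False by (simp add: coeff_eq_0 binomial_eq_0)
qed

section \<open>Elementary symmetric functions of the t_i\<close>

definition zeta_weight :: "nat \<Rightarrow> nat \<Rightarrow> complex" where
  "zeta_weight n i = inverse (1 - zeta n ^ i)"

lemma prod_zeta_weight:
  assumes "n > 0"
  shows "(\<Prod>i\<in>{1..n-1}. zeta_weight n i) = 1 / of_nat n"
  using prod_diff_zeta_powers[OF assms, of 1] prod_inversef[of "\<lambda>i. 1 - zeta n ^ i" "{1..n-1}"]
  by (simp add: zeta_weight_def o_def divide_inverse)

lemma prod_one_plus_zeta_weight:
  assumes "n > 0"
  shows "of_nat n * x * (\<Prod>i\<in>{1..n-1}. 1 + zeta_weight n i * x) = (1 + x) ^ n - 1"
proof -
  have nonzero: "1 - zeta n ^ i \<noteq> 0" if "i \<in> {1..n-1}" for i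
  proof -
    have "0 < i" "i < n"
      using that assms by auto
    then show ?thesis
      using zeta_power_neq_1 by force
  qed
  have "(\<Prod>i\<in>{1..n-1}. 1 + zeta_weight n i * x)
      = (\<Prod>i\<in>{1..n-1}. ((1 + x) - zeta n ^ i) / (1 - zeta n ^ i))"
    by (intro prod.cong refl) (use nonzero in \<open>auto simp: zeta_weight_def field_simps\<close>)
  also have "\<dots> = (\<Prod>i\<in>{1..n-1}. (1 + x) - zeta n ^ i) / (\<Prod>i\<in>{1..n-1}. 1 - zeta n ^ i)"
    by (rule prod_dividef)
  also have "\<dots> = (\<Sum>k<n. (1 + x) ^ k) / of_nat n"
    using prod_diff_zeta_powers[OF assms, of "1 + x"] prod_diff_zeta_powers[OF assms, of 1] by simp
  finally show ?thesis
    using assms power_diff_1_eq[of "1 + x" n] by simp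
qed

lemma elem_sym_zeta_weight:
  assumes "n > 0"
  shows "of_nat n * elem_sym {1..n-1} (zeta_weight n) k = of_nat (n choose Suc k)"
proof -
  define P where "P = (\<Prod>i\<in>{1..n-1}. monom (zeta_weight n i) 1 + 1)"
  have "smult (of_nat n) (pCons 0 P) = [:1, 1:] ^ n - 1"
    using prod_one_plus_zeta_weight[OF assms]
    by (simp add: poly_eq_poly_eq_iff[symmetric] fun_eq_iff P_def poly_prod poly_monom ac_simps)
  then have "of_nat n * coeff P k = coeff ([:1, 1:] ^ n - 1 :: complex poly) (Suc k)"
    by (metis coeff_pCons_Suc coeff_smult)
  moreover have "coeff P k = elem_sym {1..n-1} (zeta_weight n) k"
    using coeff_prod_monom_plus_1[of "{1..n-1}" 1] by (simp add: P_def)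
  ultimately show ?thesis
    by (simp add: coeff_linear_poly_power_1)
qed

lemma prod_one_minus_zeta_weight_squared:
  assumes "n > 0"
  shows "of_nat n ^ 2 * x ^ 2 * (\<Prod>i\<in>{1..n-1}. 1 - zeta_weight n i ^ 2 * x ^ 2)
       = (1 + x) ^ n + (1 - x) ^ n - 1 - (1 - x ^ 2) ^ n"
proof -
  define P where "P = (\<lambda>x. \<Prod>i\<in>{1..n-1}. 1 + zeta_weight n i * x)"
  have "(\<Prod>i\<in>{1..n-1}. 1 - zeta_weight n i ^ 2 * x ^ 2) = P x * P (- x)"
    by (simp add: P_def prod.distrib[symmetric] algebra_simps power2_eq_square)
  then have "of_nat n ^ 2 * x ^ 2 * (\<Prod>i\<in>{1..n-1}. 1 - zeta_weight n i ^ 2 * x ^ 2)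
      = (of_nat n * x * P x) * - (of_nat n * (- x) * P (- x))"
    by (simp add: power2_eq_square algebra_simps)
  also have "\<dots> = ((1 + x) ^ n - 1) * (1 - (1 - x) ^ n)"
    unfolding P_def prod_one_plus_zeta_weight[OF assms] by simp
  also have "\<dots> = (1 + x) ^ n + (1 - x) ^ n - 1 - ((1 + x) * (1 - x)) ^ n"
    unfolding power_mult_distrib by (simp add: algebra_simps)
  finally show ?thesis
    by (simp add: power2_eq_square algebra_simps)
qed

lemma elem_sym_zeta_weight_squares:
  assumes "n > 0"
  shows "of_nat n ^ 2 * elem_sym {1..n-1} (\<lambda>i. zeta_weight n i ^ 2) m
       = of_nat (n choose Suc m) + 2 * (-1) ^ m * of_nat (n choose (2 * m + 2))"
proof -
  define Q where "Q = (\<Prod>i\<in>{1..n-1}. monom (- (zeta_weight n i ^ 2)) 2 + 1)"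
  have "poly Q x = (\<Prod>i\<in>{1..n-1}. 1 - zeta_weight n i ^ 2 * x ^ 2)" for x
    by (simp add: Q_def poly_prod poly_monom)
  then have poly_identity: "smult (of_nat n ^ 2) (monom 1 2 * Q)
      = [:1, 1:] ^ n + [:1, -1:] ^ n - 1 - (\<Prod>i<n. monom (-1) 2 + 1)"
    using prod_one_minus_zeta_weight_squared[OF assms]
    by (simp add: poly_eq_poly_eq_iff[symmetric] fun_eq_iff poly_monom mult.assoc)
  have "of_nat n ^ 2 * coeff Q (2 * m)
      = coeff ([:1, 1:] ^ n + [:1, -1:] ^ n - 1 - (\<Prod>i<n. monom (-1) 2 + 1) :: complex poly) (2 + 2 * m)"
    using arg_cong[where f = "\<lambda>p. coeff p (2 + 2 * m)", OF poly_identity]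
    by (simp only: coeff_smult coeff_monom_mult mult_1 not_add_less1 if_False add_diff_cancel_left')
  also have "\<dots> = 2 * of_nat (n choose (2 * m + 2)) - (-1) ^ Suc m * of_nat (n choose Suc m)"
    using coeff_prod_monom_plus_1[of "{..<n}" 2 "\<lambda>_. -1 :: complex" "Suc m"]
    by (simp add: coeff_linear_poly_power_1 elem_sym_const power_mult_distrib power_add)
  finally have "of_nat n ^ 2 * ((-1) ^ m * elem_sym {1..n-1} (\<lambda>i. zeta_weight n i ^ 2) m)
      = 2 * of_nat (n choose (2 * m + 2)) + (-1) ^ m * of_nat (n choose Suc m)"
    using coeff_prod_monom_plus_1[of "{1..n-1}" 2 "\<lambda>i. - (zeta_weight n i ^ 2)" m]
    by (simp add: Q_def elem_sym_uminus)
  then have "(-1) ^ m * (of_nat n ^ 2 * ((-1) ^ m * elem_sym {1..n-1} (\<lambda>i. zeta_weight n i ^ 2) m))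
      = (-1) ^ m * (2 * of_nat (n choose (2 * m + 2)) + (-1) ^ m * of_nat (n choose Suc m))"
    by (rule arg_cong)
  then show ?thesis
    by (simp add: algebra_simps flip: power_mult_distrib)
qed

lemma of_nat_Suc_times_binomial:
  "of_nat (Suc k) * of_nat (Suc N choose Suc k) = (of_nat (Suc N) * of_nat (N choose k) :: 'a::comm_semiring_1)"
  by (metis Suc_times_binomial_eq of_nat_mult mult.commute)

lemma elem_sym_zeta_weight_squares_Suc:
  "of_nat (Suc N) * of_nat (Suc m) * elem_sym {1..N} (\<lambda>i. zeta_weight (Suc N) i ^ 2) m
     = of_nat (N choose m) + (-1) ^ m * of_nat (N choose (2 * m + 1))"
proof -
  let ?e = "elem_sym {1..N} (\<lambda>i. zeta_weight (Suc N) i ^ 2) m"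
  have "of_nat (Suc N) * (of_nat (Suc N) * of_nat (Suc m) * ?e) = of_nat (Suc m) * (of_nat (Suc N) ^ 2 * ?e)"
    by (simp only: power2_eq_square mult_ac)
  also have "\<dots> = of_nat (Suc m) * of_nat (Suc N choose Suc m)
      + (-1) ^ m * (of_nat (Suc (2 * m + 1)) * of_nat (Suc N choose Suc (2 * m + 1)))"
    using elem_sym_zeta_weight_squares[of "Suc N" m] by (simp add: algebra_simps)
  also have "\<dots> = of_nat (Suc N) * (of_nat (N choose m) + (-1) ^ m * of_nat (N choose (2 * m + 1)))"
    by (simp only: of_nat_Suc_times_binomial algebra_simps)
  finally show ?thesis
    by (simp only: mult_left_cancel of_nat_eq_0_iff nat.distinct(1) not_False_eq_True)
qed

section \<open>Monomial symmetric functions\<close>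

definition funs_with_values :: "'a set \<Rightarrow> nat multiset \<Rightarrow> ('a \<Rightarrow> nat) set" where
  "funs_with_values S M = {f. (\<forall>i. i \<notin> S \<longrightarrow> f i = 0) \<and> image_mset f (mset_set S) = M}"

text \<open>The multiset M lists the exponent of every element of S, zeros included, so this is the
  monomial symmetric function m_M of the values t i.\<close>

definition monomial_sum :: "'a set \<Rightarrow> ('a \<Rightarrow> 'b::comm_semiring_1) \<Rightarrow> nat multiset \<Rightarrow> 'b" where
  "monomial_sum S t M = (\<Sum>f\<in>funs_with_values S M. \<Prod>i\<in>S. t i ^ f i)"

lemma finite_funs_with_values:
  assumes "finite S"
  shows "finite (funs_with_values S M)"
proof (rule finite_subset)
  show "funs_with_values S M \<subseteq> {f. \<forall>i. (i \<in> S \<longrightarrow> f i \<in> set_mset M) \<and> (i \<notin> S \<longrightarrow> f i = 0)}"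
    using assms by (auto simp: funs_with_values_def)
  show "finite {f. \<forall>i. (i \<in> S \<longrightarrow> f i \<in> set_mset M) \<and> (i \<notin> S \<longrightarrow> f i = (0::nat))}"
    using assms by (intro finite_set_of_finite_funs) auto
qed

lemma funs_with_values_in_mset:
  assumes "finite S" "f \<in> funs_with_values S M" "i \<in> S"
  shows "f i \<in># M"
proof -
  from assms(2) have "M = image_mset f (mset_set S)"
    by (simp add: funs_with_values_def)
  with assms(1,3) show ?thesis
    by simp
qed

lemma image_mset_mset_set_vanishing:
  assumes "finite S" "I \<subseteq> S" "\<forall>i\<in>S - I. f i = 0"
  shows "image_mset f (mset_set S) = image_mset f (mset_set I) + replicate_mset (card S - card I) 0"
proof -
  have "mset_set S = mset_set I + mset_set (S - I)"
    using assms mset_set_Union[of I "S - I"] by (metis Diff_disjoint Diff_partition finite_Diff finite_subset)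
  moreover have "image_mset f (mset_set (S - I)) = image_mset (\<lambda>_. 0) (mset_set (S - I))"
    using assms by (intro image_mset_cong) auto
  ultimately show ?thesis
    using assms by (simp add: image_mset_const_eq card_Diff_subset finite_subset)
qed

lemma monomial_sum_image_Suc:
  assumes "finite S"
  shows "monomial_sum S t (image_mset Suc M) = (\<Prod>i\<in>S. t i) * monomial_sum S t M"
proof -
  define shift where "shift g i = (if i \<in> S then Suc (g i) else 0)" for g :: "'a \<Rightarrow> nat" and i
  have image_shift: "image_mset (shift g) (mset_set S) = image_mset Suc (image_mset g (mset_set S))" for g
    unfolding image_mset.compositionality using assms by (intro image_mset_cong) (simp add: shift_def)
  have "bij_betw shift (funs_with_values S M) (funs_with_values S (image_mset Suc M))"
  proof (rule bij_betw_byWitness[where f' = "\<lambda>f i. f i - 1"])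
    show "\<forall>g\<in>funs_with_values S M. (\<lambda>i. shift g i - 1) = g"
      by (auto simp: funs_with_values_def shift_def)
    show "\<forall>f\<in>funs_with_values S (image_mset Suc M). shift (\<lambda>i. f i - 1) = f"
    proof
      fix f assume f: "f \<in> funs_with_values S (image_mset Suc M)"
      then have "f i \<in># image_mset Suc M" if "i \<in> S" for i
        using funs_with_values_in_mset[OF assms] that by blast
      then show "shift (\<lambda>i. f i - 1) = f"
        using f by (force simp: funs_with_values_def shift_def)
    qed
    show "shift ` funs_with_values S M \<subseteq> funs_with_values S (image_mset Suc M)"
      by (auto simp: funs_with_values_def image_shift) (simp add: shift_def)
    show "(\<lambda>f i. f i - 1) ` funs_with_values S (image_mset Suc M) \<subseteq> funs_with_values S M"
    proof (clarsimp simp: funs_with_values_def)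
      fix f assume "image_mset f (mset_set S) = image_mset Suc M"
      then have "image_mset (\<lambda>x. x - 1) (image_mset f (mset_set S)) = M"
        by (simp add: image_mset.compositionality o_def)
      then show "image_mset (\<lambda>i. f i - Suc 0) (mset_set S) = M"
        by (simp add: image_mset.compositionality o_def)
    qed
  qed
  then have "monomial_sum S t (image_mset Suc M) = (\<Sum>g\<in>funs_with_values S M. \<Prod>i\<in>S. t i ^ shift g i)"
    unfolding monomial_sum_def by (rule sum.reindex_bij_betw[symmetric])
  also have "\<dots> = (\<Prod>i\<in>S. t i) * monomial_sum S t M"
    by (simp add: monomial_sum_def sum_distrib_left shift_def prod.distrib[symmetric] cong: prod.cong)
  finally show ?thesis .
qed

lemma bij_betw_map_vanishing_funs:
  assumes "distinct L"
  shows "bij_betw (\<lambda>f. map f L) {f :: 'a \<Rightarrow> 'b::zero. \<forall>i. i \<notin> set L \<longrightarrow> f i = 0}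
           {xs. length xs = length L}"
    (is "bij_betw _ ?F _")
proof (rule bij_betwI')
  fix f g assume f: "f \<in> ?F" and g: "g \<in> ?F"
  show "(map f L = map g L) = (f = g)"
  proof
    assume "map f L = map g L"
    then have "f i = g i" for i
      using f g by (cases "i \<in> set L") (auto simp: map_eq_conv)
    then show "f = g" ..
  qed simp
next
  fix xs :: "'b list"
  assume xs: "xs \<in> {xs. length xs = length L}"
  define f where "f i = (case map_of (zip L xs) i of None \<Rightarrow> 0 | Some x \<Rightarrow> x)" for i
  have "map f L = xs"
    using xs assms by (intro nth_equalityI) (auto simp: f_def map_of_zip_nth)
  moreover have "f i = 0" if "i \<notin> set L" for i
    using that by (auto simp: f_def dest: map_of_SomeD set_zip_leftD split: option.split)
  ultimately show "\<exists>f\<in>?F. xs = map f L"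
    by auto
qed simp

lemma monomial_sum_eq_sum_permutations:
  fixes t :: "'a::linorder \<Rightarrow> 'b::comm_semiring_1"
  assumes "finite I" "size M = card I"
  shows "monomial_sum I t M
       = (\<Sum>xs\<in>permutations_of_multiset M. \<Prod>k<length xs. t (sorted_list_of_set I ! k) ^ (xs ! k))"
proof -
  let ?L = "sorted_list_of_set I"
  have "bij_betw (\<lambda>f. map f ?L)
      {f \<in> {f. \<forall>i. i \<notin> set ?L \<longrightarrow> f i = 0}. image_mset f (mset_set I) = M}
      {xs \<in> {xs. length xs = length ?L}. mset xs = M}"
    using assms(1) by (intro bij_betw_Collect bij_betw_map_vanishing_funs) (simp_all flip: mset_set_set)
  moreover have "{f \<in> {f. \<forall>i. i \<notin> set ?L \<longrightarrow> f i = 0}. image_mset f (mset_set I) = M} = funs_with_values I M"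
    using assms(1) by (simp add: funs_with_values_def)
  moreover have "{xs \<in> {xs. length xs = length ?L}. mset xs = M} = permutations_of_multiset M"
    using assms by (auto simp: permutations_of_multiset_def dest: arg_cong[where f = size])
  ultimately have bij: "bij_betw (\<lambda>f. map f ?L) (funs_with_values I M) (permutations_of_multiset M)"
    by (simp only:)
  have "(\<Prod>i\<in>I. t i ^ f i) = (\<Prod>k<length (map f ?L). t (?L ! k) ^ (map f ?L ! k))" for f
    using prod.reindex_bij_betw[OF bij_betw_nth[of ?L "{..<length ?L}" I], of "\<lambda>i. t i ^ f i"] assms(1)
    by simp
  then have "monomial_sum I t M
      = (\<Sum>f\<in>funs_with_values I M. \<Prod>k<length (map f ?L). t (?L ! k) ^ (map f ?L ! k))"
    unfolding monomial_sum_def by (intro sum.cong) auto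
  also have "\<dots> = (\<Sum>xs\<in>permutations_of_multiset M. \<Prod>k<length xs. t (?L ! k) ^ (xs ! k))"
    by (rule sum.reindex_bij_betw[OF bij])
  finally show ?thesis .
qed

lemma add_replicate_zeros_cancel:
  fixes A B :: "nat multiset"
  assumes "A + replicate_mset j 0 = B + replicate_mset k 0" "0 \<notin># A" "0 \<notin># B"
  shows "A = B"
proof (rule multiset_eqI)
  fix x
  show "count A x = count B x"
  proof (cases "x = 0")
    case True
    then show ?thesis
      using assms(2,3) by (simp add: not_in_iff)
  next
    case False
    then show ?thesis
      using arg_cong[OF assms(1), of "\<lambda>M. count M x"] by simp
  qed
qed

lemma support_funs_with_values:
  assumes "finite I" "0 \<notin># M" "f \<in> funs_with_values I M"
  shows "{i. f i \<noteq> 0} = I"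
  using funs_with_values_in_mset[OF assms(1,3)] assms(2,3) by (force simp: funs_with_values_def)

lemma funs_with_values_pad_zeros:
  assumes "finite S" "0 \<notin># M"
  shows "funs_with_values S (M + replicate_mset (card S - size M) 0)
       = (\<Union>I\<in>{I. I \<subseteq> S \<and> card I = size M}. funs_with_values I M)"
proof (intro equalityI subsetI)
  fix f assume f: "f \<in> funs_with_values S (M + replicate_mset (card S - size M) 0)"
  define I where "I = {i \<in> S. f i \<noteq> 0}"
  have "I \<subseteq> S" "finite I"
    using assms(1) by (auto simp: I_def)
  have "image_mset f (mset_set I) + replicate_mset (card S - card I) 0
      = M + replicate_mset (card S - size M) 0"
    using f image_mset_mset_set_vanishing[OF assms(1) \<open>I \<subseteq> S\<close>, of f]
    by (simp add: funs_with_values_def I_def)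
  moreover have "0 \<notin># image_mset f (mset_set I)"
    using \<open>finite I\<close> by (auto simp: I_def)
  ultimately have "image_mset f (mset_set I) = M"
    using assms(2) by (rule add_replicate_zeros_cancel)
  moreover from this have "card I = size M"
    using \<open>finite I\<close> by (metis size_image_mset size_mset_set)
  moreover have "\<forall>i. i \<notin> I \<longrightarrow> f i = 0"
    using f by (auto simp: funs_with_values_def I_def)
  ultimately show "f \<in> (\<Union>I\<in>{I. I \<subseteq> S \<and> card I = size M}. funs_with_values I M)"
    using \<open>I \<subseteq> S\<close> by (auto simp: funs_with_values_def)
next
  fix f assume "f \<in> (\<Union>I\<in>{I. I \<subseteq> S \<and> card I = size M}. funs_with_values I M)"
  then obtain I where I: "I \<subseteq> S" "card I = size M" and f: "f \<in> funs_with_values I M"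
    by blast
  then have "image_mset f (mset_set S) = M + replicate_mset (card S - size M) 0"
    using image_mset_mset_set_vanishing[OF assms(1) I(1), of f] by (auto simp: funs_with_values_def)
  then show "f \<in> funs_with_values S (M + replicate_mset (card S - size M) 0)"
    using f I(1) by (auto simp: funs_with_values_def)
qed

lemma monomial_sum_pad_zeros:
  assumes "finite S" "0 \<notin># M"
  shows "monomial_sum S t (M + replicate_mset (card S - size M) 0)
       = (\<Sum>I | I \<subseteq> S \<and> card I = size M. monomial_sum I t M)"
proof -
  let ?K = "{I. I \<subseteq> S \<and> card I = size M}"
  have finite_K: "finite ?K"
    using assms(1) by (auto intro: finite_subset[of _ "Pow S"])
  have finite_I: "finite I" if "I \<in> ?K" for I
    using that assms(1) finite_subset by blast
  have "\<forall>I\<in>?K. finite (funs_with_values I M)"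
    using finite_I finite_funs_with_values by blast
  moreover have "\<forall>I\<in>?K. \<forall>J\<in>?K. I \<noteq> J \<longrightarrow> funs_with_values I M \<inter> funs_with_values J M = {}"
    using support_funs_with_values[OF finite_I assms(2)] by blast
  ultimately have "monomial_sum S t (M + replicate_mset (card S - size M) 0)
      = (\<Sum>I\<in>?K. \<Sum>f\<in>funs_with_values I M. \<Prod>i\<in>S. t i ^ f i)"
    unfolding monomial_sum_def funs_with_values_pad_zeros[OF assms] by (rule sum.UNION_disjoint[OF finite_K])
  also have "\<dots> = (\<Sum>I\<in>?K. monomial_sum I t M)"
    unfolding monomial_sum_def
  proof (rule sum.cong[OF refl], rule sum.cong[OF refl])
    fix I f assume "I \<in> ?K" "f \<in> funs_with_values I M"
    then show "(\<Prod>i\<in>S. t i ^ f i) = (\<Prod>i\<in>I. t i ^ f i)"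
      using assms(1) by (intro prod.mono_neutral_right) (auto simp: funs_with_values_def)
  qed
  finally show ?thesis .
qed

lemma calY_eq_monomial_sum:
  assumes "0 \<notin> set s"
  shows "calY n s = monomial_sum {1..n-1} (zeta_weight n) (mset s + replicate_mset (n - 1 - length s) 0)"
proof -
  let ?K = "{I. I \<subseteq> {1..n-1} \<and> card I = length s}"
  let ?term = "\<lambda>xs I. \<Prod>k<length xs. zeta_weight n (sorted_list_of_set I ! k) ^ (xs ! k)"
  have "calY n s = (\<Sum>xs\<in>permutations_of_multiset (mset s). \<Sum>I\<in>?K. ?term xs I)"
    unfolding calY_def frakZ_def zeta_weight_def
    by (intro sum.cong refl) (auto simp: permutations_of_multiset_def power_inverse dest: mset_eq_length)
  also have "\<dots> = (\<Sum>I\<in>?K. \<Sum>xs\<in>permutations_of_multiset (mset s). ?term xs I)"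
    by (rule sum.swap)
  also have "\<dots> = (\<Sum>I\<in>?K. monomial_sum I (zeta_weight n) (mset s))"
  proof (rule sum.cong[OF refl])
    fix I assume I: "I \<in> ?K"
    then have "finite I"
      using finite_subset by auto
    with I show "(\<Sum>xs\<in>permutations_of_multiset (mset s). ?term xs I) = monomial_sum I (zeta_weight n) (mset s)"
      by (simp add: monomial_sum_eq_sum_permutations)
  qed
  also have "\<dots> = monomial_sum {1..n-1} (zeta_weight n) (mset s + replicate_mset (n - 1 - length s) 0)"
    using monomial_sum_pad_zeros[of "{1..n-1}" "mset s" "zeta_weight n"] assms by simp
  finally show ?thesis .
qed

section \<open>The product of e_p(t) and e_m(t^2)\<close>

definition pair_exponent :: "'a set \<Rightarrow> 'a set \<Rightarrow> 'a \<Rightarrow> nat" where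
  "pair_exponent A B i = (if i \<in> A then 1 else 0) + (if i \<in> B then 2 else 0)"

lemma prod_pair_exponent:
  assumes "finite S" "A \<subseteq> S" "B \<subseteq> S"
  shows "(\<Prod>i\<in>S. t i ^ pair_exponent A B i) = (\<Prod>i\<in>A. t i) * (\<Prod>i\<in>B. t i ^ 2)"
proof -
  have "(\<Prod>i\<in>S. t i ^ pair_exponent A B i)
      = (\<Prod>i\<in>S. if i \<in> A then t i else 1) * (\<Prod>i\<in>S. if i \<in> B then t i ^ 2 else 1)"
    unfolding prod.distrib[symmetric] by (intro prod.cong refl) (simp add: pair_exponent_def power_add)
  also have "\<dots> = (\<Prod>i\<in>A. t i) * (\<Prod>i\<in>B. t i ^ 2)"
    using assms by (simp add: prod.inter_restrict[symmetric] Int_absorb1)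
  finally show ?thesis .
qed

lemma image_mset_pair_exponent:
  assumes "finite S" "A \<subseteq> S" "B \<subseteq> S"
  shows "image_mset (pair_exponent A B) (mset_set S)
       = replicate_mset (card (A \<inter> B)) 3 + replicate_mset (card B - card (A \<inter> B)) 2
         + replicate_mset (card A - card (A \<inter> B)) 1
         + replicate_mset (card S + card (A \<inter> B) - card B - card A) 0"
proof (rule multiset_eqI)
  fix x
  have "finite A" "finite B"
    using assms finite_subset by auto
  then have "card (B - A) = card B - card (A \<inter> B)" "card (A - B) = card A - card (A \<inter> B)"
    by (simp_all add: card_Diff_subset_Int Int_commute)
  moreover have "card (S - (A \<union> B)) = card S + card (A \<inter> B) - card B - card A"
    using assms \<open>finite A\<close> \<open>finite B\<close> card_Un_Int[of A B] by (simp add: card_Diff_subset)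
  moreover have "{i \<in> S. pair_exponent A B i = x}
      = (if x = 3 then A \<inter> B else if x = 2 then B - A else if x = 1 then A - B
         else if x = 0 then S - (A \<union> B) else {})"
    using assms by (auto simp: pair_exponent_def)
  ultimately show "count (image_mset (pair_exponent A B) (mset_set S)) x
      = count (replicate_mset (card (A \<inter> B)) 3 + replicate_mset (card B - card (A \<inter> B)) 2
         + replicate_mset (card A - card (A \<inter> B)) 1
         + replicate_mset (card S + card (A \<inter> B) - card B - card A) 0) x"
    using assms(1) by (simp add: count_image_mset_eq_card_vimage)
qed

lemma pair_exponent_inverse:
  assumes "A \<subseteq> S" "B \<subseteq> S"
  shows "{i \<in> S. odd (pair_exponent A B i)} = A" "{i \<in> S. 2 \<le> pair_exponent A B i} = B"
  using assms by (auto simp: pair_exponent_def)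

lemma pair_exponent_odd_ge_2:
  assumes "\<forall>i\<in>S. f i \<le> 3" "\<forall>i. i \<notin> S \<longrightarrow> f i = 0"
  shows "pair_exponent {i \<in> S. odd (f i)} {i \<in> S. 2 \<le> f i} = f"
proof
  fix i
  show "pair_exponent {i \<in> S. odd (f i)} {i \<in> S. 2 \<le> f i} i = f i"
  proof (cases "i \<in> S")
    case True
    then have "f i = 0 \<or> f i = 1 \<or> f i = 2 \<or> f i = 3"
      using assms(1) by fastforce
    then show ?thesis
      using True by (auto simp: pair_exponent_def)
  qed (use assms(2) in \<open>simp add: pair_exponent_def\<close>)
qed

lemma cards_from_image_mset_pair_exponent:
  assumes "finite S" "A \<subseteq> S" "B \<subseteq> S" "a \<le> m" "a \<le> p"
    and "image_mset (pair_exponent A B) (mset_set S) = replicate_mset a 3 + replicate_mset (m - a) 2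
           + replicate_mset (p - a) 1 + replicate_mset (card S + a - m - p) 0"
  shows "card A = p" "card B = m" "card (A \<inter> B) = a"
proof -
  note counts = trans[OF image_mset_pair_exponent[OF assms(1-3), symmetric] assms(6)]
  have "card (A \<inter> B) \<le> card A" "card (A \<inter> B) \<le> card B"
    using assms(1-3) by (auto intro: card_mono finite_subset)
  moreover from arg_cong[OF counts, of "\<lambda>M. count M 3"] arg_cong[OF counts, of "\<lambda>M. count M 2"]
    arg_cong[OF counts, of "\<lambda>M. count M 1"]
  have "card (A \<inter> B) = a" "card B - card (A \<inter> B) = m - a" "card A - card (A \<inter> B) = p - a"
    by simp_all
  ultimately show "card A = p" "card B = m" "card (A \<inter> B) = a"
    using assms(4,5) by presburger+
qed

lemma bij_betw_pair_exponent:
  assumes "finite S" "a \<le> m" "a \<le> p"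
  shows "bij_betw (\<lambda>(A, B). pair_exponent A B)
           {(A, B). A \<subseteq> S \<and> B \<subseteq> S \<and> card A = p \<and> card B = m \<and> card (A \<inter> B) = a}
           (funs_with_values S (replicate_mset a 3 + replicate_mset (m - a) 2
              + replicate_mset (p - a) 1 + replicate_mset (card S + a - m - p) 0))"
    (is "bij_betw ?pe ?P (funs_with_values S ?M)")
proof (rule bij_betw_byWitness[where f' = "\<lambda>f. ({i \<in> S. odd (f i)}, {i \<in> S. 2 \<le> f i})"])
  let ?split = "\<lambda>f. ({i \<in> S. odd (f i)}, {i \<in> S. 2 \<le> f i})"
  show "\<forall>x\<in>?P. ?split (?pe x) = x"
    by (auto simp: pair_exponent_inverse)
  have inverse: "?pe (?split f) = f" if "f \<in> funs_with_values S ?M" for f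
    unfolding prod.case
  proof (rule pair_exponent_odd_ge_2)
    show "\<forall>i\<in>S. f i \<le> 3"
      using funs_with_values_in_mset[OF assms(1) that] by (fastforce split: if_splits)
  qed (use that in \<open>simp add: funs_with_values_def\<close>)
  then show "\<forall>f\<in>funs_with_values S ?M. ?pe (?split f) = f"
    by blast
  show "?pe ` ?P \<subseteq> funs_with_values S ?M"
    using assms(1) by (auto simp: funs_with_values_def image_mset_pair_exponent) (auto simp: pair_exponent_def)
  show "?split ` funs_with_values S ?M \<subseteq> ?P"
  proof
    fix x assume "x \<in> ?split ` funs_with_values S ?M"
    then obtain f where f: "f \<in> funs_with_values S ?M" and x: "x = ?split f"
      by blast
    then have "image_mset (?pe (?split f)) (mset_set S) = ?M"
      using inverse[OF f] by (simp add: funs_with_values_def)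
    from cards_from_image_mset_pair_exponent[OF assms(1) _ _ assms(2,3) this[unfolded prod.case]]
    show "x \<in> ?P"
      unfolding x by auto
  qed
qed

lemma card_Int_bounds:
  assumes "finite S" "A \<subseteq> S" "B \<subseteq> S"
  shows "card A + card B - card S \<le> card (A \<inter> B)" "card (A \<inter> B) \<le> min (card A) (card B)"
proof -
  have "finite A" "finite B" "card (A \<union> B) \<le> card S"
    using assms by (auto intro: finite_subset card_mono)
  then show "card A + card B - card S \<le> card (A \<inter> B)" "card (A \<inter> B) \<le> min (card A) (card B)"
    using card_Un_Int[of A B] card_mono[of A "A \<inter> B"] card_mono[of B "A \<inter> B"] by auto
qed

lemma elem_sym_mult_elem_sym_squares:
  assumes "finite S"
  shows "elem_sym S t p * elem_sym S (\<lambda>i. t i ^ 2) m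
       = (\<Sum>a = m + p - card S..min m p. monomial_sum S t (replicate_mset a 3 + replicate_mset (m - a) 2
            + replicate_mset (p - a) 1 + replicate_mset (card S + a - m - p) 0))"
proof -
  let ?P = "{(A, B). A \<subseteq> S \<and> B \<subseteq> S \<and> card A = p \<and> card B = m}"
  let ?slice = "\<lambda>a. {(A, B). A \<subseteq> S \<and> B \<subseteq> S \<and> card A = p \<and> card B = m \<and> card (A \<inter> B) = a}"
  let ?g = "\<lambda>f. \<Prod>i\<in>S. t i ^ f i"
  have "finite ?P"
    using assms by (auto intro: finite_subset[of _ "Pow S \<times> Pow S"])
  have range: "card (A \<inter> B) \<in> {m + p - card S..min m p}" if "(A, B) \<in> ?P" for A B
    using that card_Int_bounds[OF assms, of A B] by (auto simp: add.commute)
  have "elem_sym S t p * elem_sym S (\<lambda>i. t i ^ 2) m = (\<Sum>(A, B)\<in>?P. (\<Prod>i\<in>A. t i) * (\<Prod>i\<in>B. t i ^ 2))"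
    unfolding elem_sym_def sum_product sum.cartesian_product by (rule sum.cong) auto
  also have "\<dots> = (\<Sum>(A, B)\<in>?P. ?g (pair_exponent A B))"
    using assms by (intro sum.cong refl) (auto simp: prod_pair_exponent)
  also have "\<dots> = (\<Sum>a = m + p - card S..min m p.
      \<Sum>x\<in>{x \<in> ?P. (\<lambda>(A, B). card (A \<inter> B)) x = a}. (\<lambda>(A, B). ?g (pair_exponent A B)) x)"
    by (rule sum.group[symmetric]) (use \<open>finite ?P\<close> range in auto)
  also have "\<dots> = (\<Sum>a = m + p - card S..min m p. monomial_sum S t (replicate_mset a 3 + replicate_mset (m - a) 2
            + replicate_mset (p - a) 1 + replicate_mset (card S + a - m - p) 0))"
  proof (rule sum.cong[OF refl])
    fix a assume "a \<in> {m + p - card S..min m p}"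
    then have "bij_betw (\<lambda>(A, B). pair_exponent A B) (?slice a) (funs_with_values S (replicate_mset a 3
        + replicate_mset (m - a) 2 + replicate_mset (p - a) 1 + replicate_mset (card S + a - m - p) 0))"
      by (intro bij_betw_pair_exponent assms) auto
    moreover have "{x \<in> ?P. (\<lambda>(A, B). card (A \<inter> B)) x = a} = ?slice a"
      by auto
    ultimately show "(\<Sum>x\<in>{x \<in> ?P. (\<lambda>(A, B). card (A \<inter> B)) x = a}. (\<lambda>(A, B). ?g (pair_exponent A B)) x)
        = monomial_sum S t (replicate_mset a 3 + replicate_mset (m - a) 2
            + replicate_mset (p - a) 1 + replicate_mset (card S + a - m - p) 0)"
      unfolding monomial_sum_def by (simp add: sum.reindex_bij_betw[symmetric] case_prod_beta')
  qed
  finally show ?thesis .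
qed

lemma monomial_sum_image_Suc_zeta_weight:
  assumes "0 \<notin> set s"
  shows "monomial_sum {1..N} (zeta_weight (Suc N)) (image_mset Suc (mset s + replicate_mset (N - length s) 0))
       = calY (Suc N) s / of_nat (Suc N)"
proof -
  let ?t = "zeta_weight (Suc N)"
  have "monomial_sum {1..N} ?t (image_mset Suc (mset s + replicate_mset (N - length s) 0))
      = (\<Prod>i\<in>{1..N}. ?t i) * monomial_sum {1..N} ?t (mset s + replicate_mset (N - length s) 0)"
    by (rule monomial_sum_image_Suc) simp
  also have "(\<Prod>i\<in>{1..N}. ?t i) = 1 / of_nat (Suc N)"
    using prod_zeta_weight[of "Suc N"] by simp
  also have "monomial_sum {1..N} ?t (mset s + replicate_mset (N - length s) 0) = calY (Suc N) s"
    using calY_eq_monomial_sum[OF assms, of "Suc N"] by simp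
  finally show ?thesis
    by simp
qed

lemma calY_replicate_eq_monomial_sum:
  assumes "a \<le> m" "a \<le> p" "m + p \<le> N + a"
  shows "calY (Suc N) (replicate a 3 @ replicate (m - a) 2 @ replicate (p - a) 1)
       = monomial_sum {1..N} (zeta_weight (Suc N)) (replicate_mset a 3 + replicate_mset (m - a) 2
           + replicate_mset (p - a) 1 + replicate_mset (N + a - m - p) 0)"
proof -
  have "N + a - m - p = N - length (replicate a 3 @ replicate (m - a) 2 @ replicate (p - a) (1::nat))"
    using assms by simp
  then show ?thesis
    by (simp add: calY_eq_monomial_sum add_ac)
qed

lemma calY_sum_eq_elem_sym_squares:
  fixes N m l :: nat
  assumes "l \<le> m" "m \<le> N"
  shows "calY (Suc N) (replicate (m - l) 2 @ replicate l 1)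
       + of_nat (Suc N) * (\<Sum>a = Suc (m - l)..min m (N - l).
            calY (Suc N) (replicate a 3 @ replicate (m - a) 2 @ replicate (N - l - a) 1))
       = of_nat (Suc N choose l) * elem_sym {1..N} (\<lambda>i. zeta_weight (Suc N) i ^ 2) m"
proof -
  define t where "t = zeta_weight (Suc N)"
  define p where "p = N - l"
  define M :: "nat \<Rightarrow> nat multiset"
    where "M a = replicate_mset a 3 + replicate_mset (m - a) 2 + replicate_mset (p - a) 1
      + replicate_mset (N + a - m - p) 0" for a
  have "elem_sym {1..N} t p * elem_sym {1..N} (\<lambda>i. t i ^ 2) m = (\<Sum>a = m - l..min m p. monomial_sum {1..N} t (M a))"
    using elem_sym_mult_elem_sym_squares[of "{1..N}" t p m] assms by (simp add: M_def p_def)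
  also have "\<dots> = monomial_sum {1..N} t (M (m - l)) + (\<Sum>a = Suc (m - l)..min m p. monomial_sum {1..N} t (M a))"
    using assms by (intro sum.atLeast_Suc_atMost) (simp add: p_def)
  also have "monomial_sum {1..N} t (M (m - l)) = calY (Suc N) (replicate (m - l) 2 @ replicate l 1) / of_nat (Suc N)"
  proof -
    have M_eq: "M (m - l) = image_mset Suc (mset (replicate (m - l) 2 @ replicate l 1)
        + replicate_mset (N - length (replicate (m - l) 2 @ replicate l (1::nat))) 0)"
      using assms by (simp add: M_def p_def numeral_3_eq_3 numeral_2_eq_2)
    show ?thesis
      unfolding M_eq t_def by (rule monomial_sum_image_Suc_zeta_weight) simp
  qed
  also have "(\<Sum>a = Suc (m - l)..min m p. monomial_sum {1..N} t (M a))
      = (\<Sum>a = Suc (m - l)..min m p. calY (Suc N) (replicate a 3 @ replicate (m - a) 2 @ replicate (p - a) 1))"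
  proof (rule sum.cong[OF refl])
    fix a assume "a \<in> {Suc (m - l)..min m p}"
    then show "monomial_sum {1..N} t (M a) = calY (Suc N) (replicate a 3 @ replicate (m - a) 2 @ replicate (p - a) 1)"
      unfolding M_def t_def using assms by (intro calY_replicate_eq_monomial_sum[symmetric]) (auto simp: p_def)
  qed
  finally have "of_nat (Suc N) * elem_sym {1..N} t p * elem_sym {1..N} (\<lambda>i. t i ^ 2) m
      = calY (Suc N) (replicate (m - l) 2 @ replicate l 1)
        + of_nat (Suc N) * (\<Sum>a = Suc (m - l)..min m p.
            calY (Suc N) (replicate a 3 @ replicate (m - a) 2 @ replicate (p - a) 1))"
    by (simp add: algebra_simps del: of_nat_Suc)
  moreover have "of_nat (Suc N) * elem_sym {1..N} t p = of_nat (Suc N choose l)"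
    using elem_sym_zeta_weight[of "Suc N" p] binomial_symmetric[of l "Suc N"] assms
    by (simp add: t_def p_def Suc_diff_le del: of_nat_Suc)
  ultimately show ?thesis
    by (simp add: t_def p_def)
qed

lemma sum_calY_blocks_reindex:
  fixes N m l :: nat
  assumes "l \<le> m" "m \<le> N"
  shows "(\<Sum>j = 0..int (Suc N) - int m - 2.
            calY_blocks (Suc N) [(3, int m - int l + 1 + j), (2, int l - 1 - j), (1, int (Suc N) - int m - 2 - j)])
       = (\<Sum>a = Suc (m - l)..min m (N - l).
            calY (Suc N) (replicate a 3 @ replicate (m - a) 2 @ replicate (N - l - a) 1))"
proof -
  let ?F = "\<lambda>j. calY_blocks (Suc N)
    [(3, int m - int l + 1 + j), (2, int l - 1 - j), (1, int (Suc N) - int m - 2 - j)]"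
  let ?G = "\<lambda>a. calY (Suc N) (replicate a 3 @ replicate (m - a) 2 @ replicate (N - l - a) 1)"
  have "bij_betw (\<lambda>a. int a - int m + int l - 1) {Suc (m - l)..N - l} {0..int (Suc N) - int m - 2}"
    using assms
    by (intro bij_betw_byWitness[where f' = "\<lambda>j. nat (j + int m - int l + 1)"]) (auto simp: image_iff)
  then have "(\<Sum>j = 0..int (Suc N) - int m - 2. ?F j)
      = (\<Sum>a = Suc (m - l)..N - l. ?F (int a - int m + int l - 1))"
    by (rule sum.reindex_bij_betw[symmetric])
  also have "\<dots> = (\<Sum>a = Suc (m - l)..N - l. if a \<le> m then ?G a else 0)"
  proof (rule sum.cong[OF refl])
    fix a assume "a \<in> {Suc (m - l)..N - l}"
    then have shifted: "int m - int l + 1 + (int a - int m + int l - 1) = int a"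
      "int l - 1 - (int a - int m + int l - 1) = int m - int a"
      "int (Suc N) - int m - 2 - (int a - int m + int l - 1) = int (N - l - a)"
      using assms by auto
    show "?F (int a - int m + int l - 1) = (if a \<le> m then ?G a else 0)"
      unfolding calY_blocks_def shifted by (auto simp: nat_diff_distrib)
  qed
  also have "\<dots> = (\<Sum>a = Suc (m - l)..min m (N - l). ?G a)"
    by (subst sum.inter_filter[symmetric]) (auto intro: sum.cong)
  finally show ?thesis .
qed

theorem theorem3:
  fixes n m l :: int
  assumes "n - 1 \<ge> m" and "m \<ge> l" and "l \<ge> 0"
  shows "calY_blocks (nat n) [(2, m - l), (1, l)]
         + of_int n * (\<Sum>j=0..n-m-2.
              calY_blocks (nat n) [(3, m - l + 1 + j), (2, l - 1 - j), (1, n - m - 2 - j)])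
       = 1 / (of_int n * (of_int m + 1))
         * (of_nat (nat (n - 1) choose nat m) + (-1) ^ nat m * of_nat (nat (n - 1) choose nat (2 * m + 1)))
         * of_nat (nat n choose nat l)"
proof -
  define N m' l' where "N = nat (n - 1)" and "m' = nat m" and "l' = nat l"
  then have n: "n = int (Suc N)" and m: "m = int m'" and l: "l = int l'" and "l' \<le> m'" "m' \<le> N"
    using assms by auto
  have casts: "nat (int (Suc N) - 1) = N" "nat (2 * int m' + 1) = 2 * m' + 1"
    "of_int (int (Suc N)) = (of_nat (Suc N) :: complex)" "of_int (int m') + 1 = (of_nat (Suc m') :: complex)"
    by (simp_all add: nat_add_distrib nat_mult_distrib)
  have first: "calY_blocks (Suc N) [(2, int m' - int l'), (1, int l')]
      = calY (Suc N) (replicate (m' - l') 2 @ replicate l' 1)"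
    using \<open>l' \<le> m'\<close> by (simp add: calY_blocks_def nat_diff_distrib)
  have closed_form: "1 / (of_nat (Suc N) * of_nat (Suc m'))
      * (of_nat (N choose m') + (-1) ^ m' * of_nat (N choose (2 * m' + 1))) * of_nat (Suc N choose l')
      = of_nat (Suc N choose l') * elem_sym {1..N} (\<lambda>i. zeta_weight (Suc N) i ^ 2) m'"
    unfolding elem_sym_zeta_weight_squares_Suc[symmetric] by (simp del: of_nat_Suc)
  show ?thesis
    unfolding n m l nat_int casts first sum_calY_blocks_reindex[OF \<open>l' \<le> m'\<close> \<open>m' \<le> N\<close>] closed_form
    by (rule calY_sum_eq_elem_sym_squares[OF \<open>l' \<le> m'\<close> \<open>m' \<le> N\<close>])
qed

end
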